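(* Let $L>0$ and consider the fourth-order ODE $$\tfrac12\,\theta=\theta^2\bigl(-\theta^{(4)}+\theta\bigr).$$ (i) There is no function $\theta\in C^4([-L,L])$, $\theta\not\equiv 0$, satisfying this ODE on $(-L,L)$ together with the boundary conditions $\theta(\pm L)=\theta'(\pm L)=0$. (ii) There is no function $\theta\in C^4(\mathbb{R})$, $\theta\not\equiv 0$, with $\theta,\theta',\theta'',\theta'''$ bounded on $\mathbb{R}$, satisfying this ODE on $\mathbb{R}$ together with $\theta(x)\to0$ as $x\to\pm\infty$.
   Context: This ODE is the profile equation for separable blow-up solutions $u(x,t)=(T-t)^{-1/2}\theta(x)$ of $u_t=u^2(-u_{xxxx}+u)$. For a solution that does not vanish, dividing by $\theta^2$, multiplying by $\theta'$ and integrating gives the first integral $\tfrac12\ln|\theta|=-\theta'''\theta+\tfrac12(\theta'')^2+\tfrac12\theta^2+C$ with a constant $C\in\mathbb{R}$. *)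

theory Defs
  imports "HOL-Analysis.Analysis"
begin

text \<open>d is the list of derivatives of f up to order 4 on S, with one-sided
  derivatives at boundary points (derivative taken within S), and the
  fourth derivative continuous on S. "f is C^4 on S" is "exists d. C4_derivs S f d".\<close>
definition C4_derivs :: "real set \<Rightarrow> (real \<Rightarrow> real) \<Rightarrow> (nat \<Rightarrow> real \<Rightarrow> real) \<Rightarrow> bool" where
  "C4_derivs S f d \<longleftrightarrow> d 0 = f \<and>
     (\<forall>k<4. \<forall>x\<in>S. (d k has_real_derivative d (Suc k) x) (at x within S)) \<and>
     continuous_on S (d 4)"

end

theory Submission
  imports Defs
begin

(* Wherever theta x \<noteq> 0 the equation is equivalent to 2 theta (theta - theta'''') = 1, so on a
   set where theta - theta'''' is bounded by M, every nonzero value satisfies |theta| \<ge> 1/(2M).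
   A continuous function on a connected set whose values avoid the punctured band 0 < |y| < c
   is identically zero as soon as it vanishes somewhere.  This gives the structure:
   - on a compact interval, a solution with a zero vanishes identically; with the boundary
     conditions theta(\<plusminus>L) = 0 this proves part (i);
   - on the whole line a nontrivial solution therefore has no zero, hence a constant sign s;
     decay of theta forces s * theta'''' \<le> -1 for large x, which is incompatible with a bounded
     theta''' (its antiderivative), proving part (ii). *)

lemma C4_derivs_continuous:
  assumes "C4_derivs S f d"
  shows "continuous_on S f" "continuous_on S (d 4)"
proof -
  have "\<forall>x\<in>S. (d 0 has_real_derivative d 1 x) (at x within S)" "d 0 = f"
    using assms by (auto simp: C4_derivs_def)
  then show "continuous_on S f"
    unfolding continuous_on_eq_continuous_within by (metis DERIV_continuous)
  show "continuous_on S (d 4)" using assms by (simp add: C4_derivs_def)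
qed

lemma C4_derivs_UNIV_third:
  assumes "C4_derivs UNIV f d"
  shows "(d 3 has_real_derivative d 4 x) (at x)"
  using assms by (auto simp: C4_derivs_def numeral_eq_Suc)

lemma profile_reciprocal:
  fixes t g :: real
  assumes "t / 2 = t^2 * (- g + t)" and "t \<noteq> 0"
  shows "2 * t * (t - g) = 1"
proof -
  have "t * (1 - 2 * t * (t - g)) = 0"
    using assms(1) by (simp add: algebra_simps power2_eq_square)
  then show ?thesis using assms(2) by simp
qed

lemma profile_lower_bound:
  fixes t g M :: real
  assumes "t / 2 = t^2 * (- g + t)" and "t \<noteq> 0" and "\<bar>t - g\<bar> \<le> M"
  shows "1 \<le> 2 * M * \<bar>t\<bar>"
proof -
  have "1 = 2 * \<bar>t\<bar> * \<bar>t - g\<bar>"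
    using profile_reciprocal[OF assms(1,2)] by (metis abs_1 abs_mult abs_numeral)
  also have "\<dots> \<le> 2 * \<bar>t\<bar> * M" using assms(3) by (simp add: mult_left_mono)
  finally show ?thesis by (simp add: mult.commute mult.left_commute)
qed

(* The image of a connected set is an interval: if it contains 0 and avoids 0 < |y| < c,
   it is {0}. *)
lemma connected_gap_vanishes:
  fixes f :: "'a::topological_space \<Rightarrow> real"
  assumes cont: "continuous_on S f" and conn: "connected S" and c: "c > 0"
    and gap: "\<forall>x\<in>S. f x \<noteq> 0 \<longrightarrow> c \<le> \<bar>f x\<bar>"
    and zero: "z \<in> S" "f z = 0" and x: "x \<in> S"
  shows "f x = 0"
proof (rule ccontr)
  assume nz: "f x \<noteq> 0"
  have img: "connected (f ` S)" using connected_continuous_image[OF cont conn] .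
  have zero_in: "0 \<in> f ` S" and x_in: "f x \<in> f ` S"
    using zero x by (auto intro: rev_image_eqI)
  obtain v where v: "v \<in> f ` S" "v \<noteq> 0" "\<bar>v\<bar> < c"
  proof (cases "f x > 0")
    case True
    define v where "v = min (f x) c / 2"
    have "0 < v" "v \<le> f x" "v < c" using True c by (auto simp: v_def)
    then show thesis using that connectedD_interval[OF img zero_in x_in, of v] by auto
  next
    case False
    define v where "v = - min (- f x) c / 2"
    have "v < 0" "f x \<le> v" "- c < v" using False nz c by (auto simp: v_def)
    then show thesis using that connectedD_interval[OF img x_in zero_in, of v] by auto
  qed
  then obtain y where y: "y \<in> S" "f y = v" by blast
  then have "c \<le> \<bar>v\<bar>" using gap v by auto
  then show False using v by linarith
qed

lemma nonvanishing_constant_sgn: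
  fixes f :: "real \<Rightarrow> real"
  assumes cont: "continuous_on UNIV f" and nz: "\<forall>x. f x \<noteq> 0"
  shows "sgn (f x) = sgn (f y)"
proof (rule ccontr)
  assume "sgn (f x) \<noteq> sgn (f y)"
  then have "(f x < 0 \<and> 0 < f y) \<or> (f y < 0 \<and> 0 < f x)"
    using nz[rule_format, of x] nz[rule_format, of y] by (auto simp: sgn_if split: if_splits)
  then obtain p q where pq: "f p < 0" "0 < f q" by blast
  have "connected (f ` UNIV)" by (rule connected_continuous_image[OF cont connected_UNIV])
  then have "0 \<in> f ` UNIV" by (rule connectedD_interval[of _ "f p" "f q"]) (use pq in auto)
  then show False using nz by auto
qed

(* A continuous solution on [a,b] (with continuous g in place of theta'''') that vanishes at one
   point vanishes everywhere.  The equation is only needed where theta \<noteq> 0. *)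
lemma profile_zero_propagates:
  fixes \<theta> g :: "real \<Rightarrow> real"
  assumes c\<theta>: "continuous_on {a..b} \<theta>" and cg: "continuous_on {a..b} g"
    and eq: "\<forall>x\<in>{a..b}. \<theta> x \<noteq> 0 \<longrightarrow> \<theta> x / 2 = (\<theta> x)^2 * (- g x + \<theta> x)"
    and zero: "z \<in> {a..b}" "\<theta> z = 0" and x: "x \<in> {a..b}"
  shows "\<theta> x = 0"
proof -
  have "bounded ((\<lambda>x. \<theta> x - g x) ` {a..b})"
    by (intro compact_imp_bounded compact_continuous_image continuous_intros c\<theta> cg) simp
  then obtain M where M: "\<forall>y\<in>{a..b}. \<bar>\<theta> y - g y\<bar> \<le> M"
    unfolding bounded_iff by auto
  have M0: "0 \<le> M" using M zero(1) by (meson abs_ge_zero order_trans)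
  have gap: "\<forall>y\<in>{a..b}. \<theta> y \<noteq> 0 \<longrightarrow> 1 / (2 * (M + 1)) \<le> \<bar>\<theta> y\<bar>"
  proof (intro ballI impI)
    fix y assume y: "y \<in> {a..b}" "\<theta> y \<noteq> 0"
    have "\<theta> y / 2 = (\<theta> y)^2 * (- g y + \<theta> y)" using eq y by blast
    moreover have "\<bar>\<theta> y - g y\<bar> \<le> M + 1" using M y(1) by fastforce
    ultimately have "1 \<le> 2 * (M + 1) * \<bar>\<theta> y\<bar>" using profile_lower_bound y(2) by blast
    then show "1 / (2 * (M + 1)) \<le> \<bar>\<theta> y\<bar>" using M0 by (simp add: field_simps)
  qed
  have "0 < 1 / (2 * (M + 1))" using M0 by simp
  then show ?thesis using connected_gap_vanishes[OF c\<theta> connected_Icc _ gap zero x] by blast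
qed

(* A function whose derivative is eventually \<le> -e < 0 decreases linearly, so it is unbounded. *)
lemma eventually_neg_derivative_unbounded:
  fixes f f' :: "real \<Rightarrow> real"
  assumes der: "\<And>x. (f has_real_derivative f' x) (at x)"
    and ev: "eventually (\<lambda>x. f' x \<le> - e) at_top" and e: "e > 0"
  shows "\<not> bounded (range f)"
proof
  assume "bounded (range f)"
  then obtain B where B: "\<And>x. \<bar>f x\<bar> \<le> B" unfolding bounded_iff by auto
  obtain X where X: "\<And>x. x \<ge> X \<Longrightarrow> f' x \<le> - e"
    using ev by (auto simp: eventually_at_top_linorder)
  define x where "x = X + (2 * B + 1) / e"
  have "X \<le> x" using B[of 0] e by (simp add: x_def)
  have "f x + e * x \<le> f X + e * X"
  proof (rule DERIV_nonpos_imp_nonincreasing[OF \<open>X \<le> x\<close>])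
    fix t assume "X \<le> t" "t \<le> x"
    then show "\<exists>y. ((\<lambda>t. f t + e * t) has_real_derivative y) (at t) \<and> y \<le> 0"
      using X[of t] der by (intro exI[of _ "f' t + e"]) (auto intro!: derivative_eq_intros)
  qed
  moreover have "e * x = e * X + (2 * B + 1)" using e by (simp add: x_def field_simps)
  ultimately have "f x \<le> f X - (2 * B + 1)" by linarith
  then show False using B[of x] B[of X] by linarith
qed

lemma no_clamped_profile:
  assumes C: "C4_derivs {-L..L} \<theta> d"
    and eq: "\<forall>x\<in>{-L<..<L}. \<theta> x / 2 = (\<theta> x)^2 * (- d 4 x + \<theta> x)"
    and bc: "\<theta> (-L) = 0" "\<theta> L = 0" and L: "L > 0" and x: "x \<in> {-L..L}"
  shows "\<theta> x = 0"
proof -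
  have "\<forall>y\<in>{-L..L}. \<theta> y \<noteq> 0 \<longrightarrow> \<theta> y / 2 = (\<theta> y)^2 * (- d 4 y + \<theta> y)"
    using eq bc by (metis atLeastAtMost_iff greaterThanLessThan_iff order_less_le)
  moreover have "L \<in> {-L..L}" using L by simp
  ultimately show ?thesis
    using profile_zero_propagates C4_derivs_continuous[OF C] bc(2) x by blast
qed

lemma no_decaying_profile:
  assumes C: "C4_derivs UNIV \<theta> d"
    and eq: "\<forall>x. \<theta> x / 2 = (\<theta> x)^2 * (- d 4 x + \<theta> x)"
    and bd: "bounded (range (d 3))" and lim: "(\<theta> \<longlongrightarrow> 0) at_top"
  shows "\<theta> x0 = 0"
proof (rule ccontr)
  assume x0: "\<theta> x0 \<noteq> 0"
  have c\<theta>: "continuous_on UNIV \<theta>" and c4: "continuous_on UNIV (d 4)"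
    using C4_derivs_continuous[OF C] by auto
  have nz: "\<forall>x. \<theta> x \<noteq> 0"
  proof
    fix x
    have "continuous_on {min x x0..max x x0} \<theta>" "continuous_on {min x x0..max x x0} (d 4)"
      by (simp_all add: continuous_on_subset[OF c\<theta>] continuous_on_subset[OF c4])
    moreover have "x \<in> {min x x0..max x x0}" "x0 \<in> {min x x0..max x x0}" by simp_all
    ultimately show "\<theta> x \<noteq> 0"
      using profile_zero_propagates[of "min x x0" "max x x0" \<theta> "d 4" x x0] eq x0 by blast
  qed
  define s where "s = sgn (\<theta> x0)"
  have s_sq: "s * s = 1" using x0 by (simp add: s_def sgn_if)
  have s: "s * \<theta> x = \<bar>\<theta> x\<bar>" for x
  proof -
    have "s = sgn (\<theta> x)" using nonvanishing_constant_sgn[OF c\<theta> nz, of x0 x] by (simp add: s_def)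
    then show ?thesis by (simp add: sgn_if)
  qed
  (* Writing 2 theta (theta - theta'''') = 1 with theta = s|theta| gives
     s theta'''' = |theta| - 1/(2|theta|), which is \<le> -1 once |theta| < 1/4. *)
  have "eventually (\<lambda>x. \<bar>\<theta> x\<bar> < 1/4) at_top"
    using tendsto_rabs_zero[OF lim] by (rule order_tendstoD) simp
  then have "eventually (\<lambda>x. s * d 4 x \<le> - 1) at_top"
  proof (rule eventually_mono)
    fix x assume small: "\<bar>\<theta> x\<bar> < 1/4"
    have pos: "0 < \<bar>\<theta> x\<bar>" using nz by simp
    have "2 * \<bar>\<theta> x\<bar> * (\<bar>\<theta> x\<bar> - s * d 4 x) = (s * s) * (2 * \<theta> x * (\<theta> x - d 4 x))"
      unfolding s[of x, symmetric] by (simp add: algebra_simps)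
    also have "\<dots> = 2 * \<theta> x * (\<theta> x - d 4 x)" by (simp only: s_sq mult_1)
    also have "\<dots> = 1" using profile_reciprocal eq nz by blast
    finally have "\<bar>\<theta> x\<bar> - s * d 4 x = 1 / (2 * \<bar>\<theta> x\<bar>)"
      using pos by (simp add: field_simps)
    moreover have "2 < 1 / (2 * \<bar>\<theta> x\<bar>)" using small pos by (simp add: field_simps)
    ultimately show "s * d 4 x \<le> - 1" using small by linarith
  qed
  moreover have "((\<lambda>x. s * d 3 x) has_real_derivative s * d 4 x) (at x)" for x
    using C4_derivs_UNIV_third[OF C] by (rule DERIV_cmult)
  ultimately have "\<not> bounded (range (\<lambda>x. s * d 3 x))"
    using eventually_neg_derivative_unbounded[of "\<lambda>x. s * d 3 x" "\<lambda>x. s * d 4 x" 1] by simp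
  moreover have "bounded (range (\<lambda>x. s * d 3 x))"
    using bounded_scaling[where c=s, OF bd] by (simp add: image_image)
  ultimately show False by contradiction
qed

theorem proposition2p1:
  fixes L :: real
  assumes "L > 0"
  shows "\<not> (\<exists>\<theta> d. C4_derivs {-L..L} \<theta> d
              \<and> (\<exists>x\<in>{-L..L}. \<theta> x \<noteq> 0)
              \<and> (\<forall>x\<in>{-L<..<L}. \<theta> x / 2 = (\<theta> x)^2 * (- d 4 x + \<theta> x))
              \<and> \<theta> (-L) = 0 \<and> \<theta> L = 0 \<and> d 1 (-L) = 0 \<and> d 1 L = 0)
       \<and> \<not> (\<exists>\<theta> d. C4_derivs UNIV \<theta> d
              \<and> (\<exists>x. \<theta> x \<noteq> 0)
              \<and> (\<forall>k<4. bounded (range (d k)))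
              \<and> (\<forall>x. \<theta> x / 2 = (\<theta> x)^2 * (- d 4 x + \<theta> x))
              \<and> (\<theta> \<longlongrightarrow> 0) at_top \<and> (\<theta> \<longlongrightarrow> 0) at_bot)"
proof (intro conjI notI; elim exE conjE bexE)
  fix \<theta> d x
  assume C: "C4_derivs {-L..L} \<theta> d" and x: "x \<in> {-L..L}" "\<theta> x \<noteq> 0"
    and eq: "\<forall>x\<in>{-L<..<L}. \<theta> x / 2 = (\<theta> x)^2 * (- d 4 x + \<theta> x)"
    and bc: "\<theta> (-L) = 0" "\<theta> L = 0"
  show False using no_clamped_profile[OF C eq bc assms x(1)] x(2) by contradiction
next
  fix \<theta> d x
  assume C: "C4_derivs UNIV \<theta> d" and x: "\<theta> x \<noteq> 0"
    and bd: "\<forall>k<4. bounded (range (d k))"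
    and eq: "\<forall>x. \<theta> x / 2 = (\<theta> x)^2 * (- d 4 x + \<theta> x)"
    and lim: "(\<theta> \<longlongrightarrow> 0) at_top"
  have "bounded (range (d 3))" using bd by simp
  then show False using no_decaying_profile[OF C eq _ lim] x by blast
qed
end
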